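(* Let $q\in\mathcal F_{\mathrm{FSSA}}$, let $Q$ be the probability measure with density $q$, and let $r>0$, $C(r,y)$, $D_r$, the partitions $A^{(m)}_0,\dots,A^{(m)}_m$ and $M$ be witnesses for membership of $q$ in $\mathcal F_{\mathrm{FSSA}}$. Then $q\log_+q\in\mathcal L^1(\mathbb{R}^d)$ and $$\int_{\mathbb{R}^d}q(y)\log_+q(y)\,\mathrm{d}y\le\int_{\operatorname{supp}(q)}D_r(y)\,\mathrm{d}Q(y)+d\log_+\!\Big(\frac2r\Big).$$
   Context: $\log_+t=\max\{\log t,0\}$ for $t>0$, $\log_+0=0$. Densities are w.r.t. Lebesgue measure; $F(A)=\int_Af\,\mathrm{d}x$; $\operatorname{supp}(f)=\{x:f(x)>0\}$. Comparison cubes are closed axis-aligned cubes; partition cubes may be half-open so as to be disjoint. "A cube of side $r$ with a vertex at $y$" means a closed axis-aligned cube of side length $r$ having $y$ as one of its vertices. A family of cubes of common side length is adjacent if they have pairwise disjoint interiors and the union of their closures is connected. Definition ($\mathcal F_{\mathrm{FSSA}}$): a density $f$ on $\mathbb{R}^d$ belongs to $\mathcal F_{\mathrm{FSSA}}$ if there exist, for each $m\ge1$, a partition $\operatorname{supp}(f)=A^{(m)}_0\sqcup A^{(m)}_1\sqcup\cdots\sqcup A^{(m)}_m$ in which $A^{(m)}_1,\dots,A^{(m)}_m$ are adjacent cubes of common side length $h_m>0$ and $A^{(m)}_0$ is the remainder, such that: (i) $f$ is continuous on $\operatorname{supp}(f)$ except on a set of $F$-measure zero; (ii) there exist $r>0$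 and, for every $y\in\operatorname{supp}(f)$, a comparison cube $C(r,y)$ of side length $r$ containing $y$, such that $D_r(y)=\log\big(f(y)/\inf_{z\in C(r,y)}f(z)\big)$ is measurable on $\operatorname{supp}(f)$ and $\int_{\operatorname{supp}(f)}D_r\,\mathrm{d}F<\infty$; (iii) there exists $M\in\mathbb N$ such that for every $m\ge M$: (a) if $y\in A^{(m)}_0$ then $C(r,y)\cap A^{(m)}_0$ contains a cube of side $r/2$ with a vertex at $y$; (b) if $y\in\operatorname{supp}(f)\setminus A^{(m)}_0$ then $C(r,y)\cap(\operatorname{supp}(f)\setminus A^{(m)}_0)$ contains a cube of side $r/2$ with a vertex at $y$. *)

theory Defs
  imports "HOL-Analysis.Analysis"
begin

definition log_plus :: "real \<Rightarrow> real" where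
  "log_plus t = (if t > 0 then max (ln t) 0 else 0)"

definition supp_dens :: "('a \<Rightarrow> real) \<Rightarrow> 'a set" where
  "supp_dens f = {x. f x > 0}"

definition closed_cube :: "'a::euclidean_space set \<Rightarrow> real \<Rightarrow> bool" where
  "closed_cube S s \<longleftrightarrow> (\<exists>a. S = cbox a (a + s *\<^sub>R One))"

text \<open>Axis-aligned cube of side s, possibly with part of its boundary removed
  (e.g. half-open): lies between the open and the closed box.\<close>
definition partition_cube :: "'a::euclidean_space set \<Rightarrow> real \<Rightarrow> bool" where
  "partition_cube S s \<longleftrightarrow>
     (\<exists>a. box a (a + s *\<^sub>R One) \<subseteq> S \<and> S \<subseteq> cbox a (a + s *\<^sub>R One))"

definition vertex_cube :: "'a::euclidean_space set \<Rightarrow> real \<Rightarrow> 'a \<Rightarrow> bool" where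
  "vertex_cube S s y \<longleftrightarrow>
     (\<exists>a. S = cbox a (a + s *\<^sub>R One) \<and>
          (\<forall>i\<in>Basis. y \<bullet> i = a \<bullet> i \<or> y \<bullet> i = a \<bullet> i + s))"

definition D_fun :: "('a \<Rightarrow> real) \<Rightarrow> ('a \<Rightarrow> 'a set) \<Rightarrow> 'a \<Rightarrow> ennreal" where
  "D_fun f C y = (if Inf (f ` C y) > 0 then ennreal (ln (f y / Inf (f ` C y))) else \<infinity>)"

end

theory Submission
  imports Defs
begin

text \<open>For \<open>y\<close> in the support let \<open>m\<^sub>y\<close> be the infimum of \<open>q\<close> over the comparison cube \<open>C y\<close>.
  Since \<open>q \<ge> m\<^sub>y\<close> on a cube of volume \<open>r\<^sup>d\<close> and \<open>q\<close> has total mass one, \<open>m\<^sub>y \<le> r\<^sup>-\<^sup>d\<close>; hence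
  \<open>log\<^sub>+ q(y) \<le> log (q(y)/m\<^sub>y) + d log (1/r) \<le> D\<^sub>r(y) + d log\<^sub>+ (2/r)\<close>.
  Multiplying by \<open>q(y)\<close> and integrating gives the claim. The full comparison cube already
  yields this bound.\<close>

lemma Inf_mult_emeasure_le_nn_integral:
  assumes "S \<in> sets M" "S \<noteq> {}" "\<And>x. x \<in> S \<Longrightarrow> f x \<ge> 0"
  shows "ennreal (Inf (f ` S)) * emeasure M S \<le> (\<integral>\<^sup>+ x. ennreal (f x) \<partial>M)"
proof -
  have bdd: "bdd_below (f ` S)"
    using assms(3) by (auto intro!: bdd_belowI[of _ 0])
  have "ennreal (Inf (f ` S)) * emeasure M S = (\<integral>\<^sup>+ x. ennreal (Inf (f ` S)) * indicator S x \<partial>M)"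
    using assms(1) by (simp add: nn_integral_cmult_indicator)
  also have "\<dots> \<le> (\<integral>\<^sup>+ x. ennreal (f x) \<partial>M)"
  proof (rule nn_integral_mono)
    fix x
    show "ennreal (Inf (f ` S)) * indicator S x \<le> ennreal (f x)"
      using bdd by (cases "x \<in> S") (auto intro!: ennreal_leI cInf_lower)
  qed
  finally show ?thesis .
qed

lemma emeasure_lebesgue_closed_cube:
  fixes S :: "'a::euclidean_space set"
  assumes "closed_cube S r" "r \<ge> 0"
  shows "emeasure lebesgue S = ennreal (r ^ DIM('a))"
proof -
  obtain a where S: "S = cbox a (a + r *\<^sub>R One)"
    using assms(1) unfolding closed_cube_def by blast
  have "emeasure lebesgue S = ennreal (\<Prod>b\<in>(Basis::'a set). r)"
    using S assms(2)
    by (simp add: emeasure_lborel_cbox_eq inner_add_left inner_diff_left inner_Basis)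
  then show ?thesis by simp
qed

lemma Inf_on_closed_cube_le:
  fixes q :: "'a::euclidean_space \<Rightarrow> real"
  assumes "\<And>x. q x \<ge> 0" "(\<integral>\<^sup>+ x. ennreal (q x) \<partial>lebesgue) \<le> 1"
    and "closed_cube S r" "r > 0"
  shows "Inf (q ` S) \<le> (1 / r) ^ DIM('a)"
proof -
  obtain a where S: "S = cbox a (a + r *\<^sub>R One)"
    using assms(3) unfolding closed_cube_def by blast
  then have S_ne: "S \<noteq> {}"
    using assms(4) by (auto simp: box_ne_empty inner_add_left inner_Basis)
  have S_meas: "S \<in> sets lebesgue"
    using S by simp
  have "0 \<le> Inf (q ` S)"
    using S_ne assms(1) by (auto intro!: cInf_greatest)
  moreover have "ennreal (Inf (q ` S)) * ennreal (r ^ DIM('a)) \<le> 1"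
    using Inf_mult_emeasure_le_nn_integral[OF S_meas S_ne, of q] assms
    by (simp add: emeasure_lebesgue_closed_cube)
  ultimately have "Inf (q ` S) * r ^ DIM('a) \<le> 1"
    using assms(4) by (simp add: ennreal_mult'[symmetric] ennreal_le_iff)
  then show ?thesis
    using assms(4) by (simp add: field_simps)
qed

lemma ln_le_dim_log_plus:
  assumes "0 < m" "m \<le> (1 / r) ^ n" "r > 0"
  shows "ln m \<le> real n * log_plus (2 / r)"
proof -
  have "ln m \<le> real n * ln (1 / r)"
    using assms by (metis ln_le_cancel_iff ln_realpow zero_less_divide_1_iff zero_less_power)
  also have "\<dots> \<le> real n * log_plus (2 / r)"
  proof (rule mult_left_mono)
    have "ln (1 / r) \<le> ln (2 / r)"
      using assms(3) by (simp add: divide_right_mono)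
    then show "ln (1 / r) \<le> log_plus (2 / r)"
      using assms(3) unfolding log_plus_def by (simp del: ln_le_cancel_iff)
  qed simp
  finally show ?thesis .
qed

lemma log_plus_le_ln_ratio_add:
  assumes "0 < m" "m \<le> t" "ln m \<le> c" "0 \<le> c"
  shows "log_plus t \<le> ln (t / m) + c"
proof -
  have "ln t = ln (t / m) + ln m" "0 \<le> ln (t / m)"
    using assms(1,2) by (simp_all add: ln_div)
  then show ?thesis
    using assms by (simp add: log_plus_def)
qed

lemma density_log_plus_le_D_fun:
  fixes q :: "'a::euclidean_space \<Rightarrow> real"
  assumes q_nonneg: "\<And>x. q x \<ge> 0" and q_mass: "(\<integral>\<^sup>+ x. ennreal (q x) \<partial>lebesgue) \<le> 1"
    and r_pos: "r > 0" and C_cube: "\<And>y. y \<in> supp_dens q \<Longrightarrow> closed_cube (C y) r \<and> y \<in> C y"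
  shows "ennreal (q y * log_plus (q y))
           \<le> ennreal (q y) * (D_fun q C y * indicator (supp_dens q) y)
             + ennreal (q y) * ennreal (real DIM('a) * log_plus (2 / r))"
    (is "_ \<le> _ + ennreal (q y) * ennreal ?c")
proof (cases "q y > 0")
  case False
  then show ?thesis using q_nonneg[of y] by simp
next
  case q_pos: True
  then have y_supp: "y \<in> supp_dens q" by (simp add: supp_dens_def)
  define m where "m = Inf (q ` C y)"
  show ?thesis
  proof (cases "m > 0")
    case False
    then show ?thesis using y_supp q_pos by (simp add: D_fun_def m_def ennreal_mult_top)
  next
    case m_pos: True
    have m_le: "m \<le> q y"
      using C_cube[OF y_supp] q_nonneg unfolding m_def
      by (auto intro!: cInf_lower bdd_belowI[of _ 0])
    have c_nonneg: "0 \<le> ?c" by (simp add: log_plus_def)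
    have "ln m \<le> ?c"
      using Inf_on_closed_cube_le[OF q_nonneg q_mass _ r_pos] C_cube[OF y_supp] m_pos r_pos
      by (intro ln_le_dim_log_plus) (auto simp: m_def)
    then have "q y * log_plus (q y) \<le> q y * ln (q y / m) + q y * ?c"
      using mult_left_mono[OF log_plus_le_ln_ratio_add[OF m_pos m_le _ c_nonneg], of "q y"] q_pos
      by (simp add: distrib_left)
    then have "ennreal (q y * log_plus (q y)) \<le> ennreal (q y * ln (q y / m) + q y * ?c)"
      by (rule ennreal_leI)
    also have "\<dots> = ennreal (q y) * ennreal (ln (q y / m)) + ennreal (q y) * ennreal ?c"
      using m_pos m_le q_pos c_nonneg by (simp add: ennreal_plus ennreal_mult)
    finally show ?thesis
      using y_supp m_pos by (simp add: D_fun_def m_def)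
  qed
qed

lemma integrable_nonneg_nn_integral_le:
  fixes f :: "'a \<Rightarrow> real"
  assumes "f \<in> borel_measurable M" "\<And>x. f x \<ge> 0"
    and "(\<integral>\<^sup>+ x. ennreal (f x) \<partial>M) \<le> B" "B < \<infinity>"
  shows "integrable M f \<and> ennreal (integral\<^sup>L M f) \<le> B"
proof -
  have int: "integrable M f"
    using assms by (intro integrableI_nonneg) (auto simp: order_le_less_trans)
  then have "ennreal (integral\<^sup>L M f) = (\<integral>\<^sup>+ x. ennreal (f x) \<partial>M)"
    using assms(2) by (simp add: nn_integral_eq_integral)
  with int assms(3) show ?thesis by simp
qed

theorem mainTheorem11:
  fixes q :: "'a::euclidean_space \<Rightarrow> real"
    and r :: real
    and C :: "'a \<Rightarrow> 'a set"
    and A :: "nat \<Rightarrow> nat \<Rightarrow> 'a set"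
    and h :: "nat \<Rightarrow> real"
    and M :: nat
  assumes q_meas: "q \<in> borel_measurable lebesgue"
    and q_nonneg: "\<And>x. q x \<ge> 0"
    and q_int: "integrable lebesgue q"
    and q_one: "integral\<^sup>L lebesgue q = 1"
    \<comment> \<open>partitions of the support, for every m \<ge> 1\<close>
    and part_union: "\<And>m. m \<ge> 1 \<Longrightarrow> supp_dens q = (\<Union>i\<in>{0..m}. A m i)"
    and part_disj: "\<And>m i j. m \<ge> 1 \<Longrightarrow> i \<le> m \<Longrightarrow> j \<le> m \<Longrightarrow> i \<noteq> j \<Longrightarrow> A m i \<inter> A m j = {}"
    and h_pos: "\<And>m. m \<ge> 1 \<Longrightarrow> h m > 0"
    and part_cubes: "\<And>m i. m \<ge> 1 \<Longrightarrow> i \<in> {1..m} \<Longrightarrow> partition_cube (A m i) (h m)"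
    and part_interiors: "\<And>m i j. m \<ge> 1 \<Longrightarrow> i \<in> {1..m} \<Longrightarrow> j \<in> {1..m} \<Longrightarrow> i \<noteq> j \<Longrightarrow>
                           interior (A m i) \<inter> interior (A m j) = {}"
    and part_connected: "\<And>m. m \<ge> 1 \<Longrightarrow> connected (\<Union>i\<in>{1..m}. closure (A m i))"
    \<comment> \<open>(i) continuity on the support outside a Q-null set\<close>
    and cont: "\<exists>N \<in> sets lebesgue. emeasure (density lebesgue (\<lambda>x. ennreal (q x))) N = 0 \<and>
                 (\<forall>y \<in> supp_dens q - N. continuous (at y within supp_dens q) q)"
    \<comment> \<open>(ii) comparison cubes and integrability of D_r\<close>
    and r_pos: "r > 0"
    and C_cube: "\<And>y. y \<in> supp_dens q \<Longrightarrow> closed_cube (C y) r \<and> y \<in> C y"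
    and D_meas: "(\<lambda>y. D_fun q C y * indicator (supp_dens q) y) \<in> borel_measurable lebesgue"
    and D_fin: "(\<integral>\<^sup>+ y. D_fun q C y * indicator (supp_dens q) y
                    \<partial>(density lebesgue (\<lambda>x. ennreal (q x)))) < \<infinity>"
    \<comment> \<open>(iii) vertex-cube conditions for m \<ge> M\<close>
    and iii_a: "\<And>m y. m \<ge> M \<Longrightarrow> m \<ge> 1 \<Longrightarrow> y \<in> A m 0 \<Longrightarrow>
                   \<exists>K. vertex_cube K (r/2) y \<and> K \<subseteq> C y \<inter> A m 0"
    and iii_b: "\<And>m y. m \<ge> M \<Longrightarrow> m \<ge> 1 \<Longrightarrow> y \<in> supp_dens q - A m 0 \<Longrightarrow>
                   \<exists>K. vertex_cube K (r/2) y \<and> K \<subseteq> C y \<inter> (supp_dens q - A m 0)"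
  shows "integrable lebesgue (\<lambda>y. q y * log_plus (q y)) \<and>
         ennreal (integral\<^sup>L lebesgue (\<lambda>y. q y * log_plus (q y)))
           \<le> (\<integral>\<^sup>+ y. D_fun q C y * indicator (supp_dens q) y
                  \<partial>(density lebesgue (\<lambda>x. ennreal (q x))))
             + ennreal (real DIM('a) * log_plus (2 / r))"
proof -
  let ?D = "\<lambda>y. D_fun q C y * indicator (supp_dens q) y"
  let ?c = "real DIM('a) * log_plus (2 / r)"
  have q_mass: "(\<integral>\<^sup>+ y. ennreal (q y) \<partial>lebesgue) = 1"
    using nn_integral_eq_integral[OF q_int] q_nonneg q_one by simp
  have "(\<integral>\<^sup>+ y. ennreal (q y * log_plus (q y)) \<partial>lebesgue)
      \<le> (\<integral>\<^sup>+ y. ennreal (q y) * ?D y + ennreal (q y) * ennreal ?c \<partial>lebesgue)"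
    by (intro nn_integral_mono density_log_plus_le_D_fun q_nonneg r_pos C_cube) (simp_all add: q_mass)
  also have "\<dots> = (\<integral>\<^sup>+ y. ennreal (q y) * ?D y \<partial>lebesgue) + (\<integral>\<^sup>+ y. ennreal (q y) \<partial>lebesgue) * ennreal ?c"
    using q_meas D_meas by (simp add: nn_integral_add nn_integral_multc)
  also have "\<dots> = (\<integral>\<^sup>+ y. ?D y \<partial>density lebesgue (\<lambda>x. ennreal (q x))) + ennreal ?c"
    using q_meas D_meas q_mass by (simp add: nn_integral_density)
  finally show ?thesis
    using q_meas q_nonneg D_fin
    by (intro integrable_nonneg_nn_integral_le) (auto simp: log_plus_def ennreal_add_less_top)
qed

end
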